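(* Let $n\ge 1$, $r\ge 1$ be integers and let $v$ be a vertex of $G(n,r)$, with $d(v)$ its degree in $G(n,r)$. (a) If every positive entry of $v$ equals $r$ (i.e. $v=rP$ for a permutation matrix $P$), then $d(v)=\delta(G(n,r))=\binom{n}{2}$, where $\delta$ denotes the minimum degree. (b) If not every positive entry of $v$ equals $r$, then $d(v)\ge \frac{(n+2)(n-1)}{2}=\binom{n}{2}+n-1$.
   Context: For integers $n,r\ge 1$, $G(n,r)$ is the simple undirected graph whose vertices are the $n\times n$ matrices with non-negative integer entries all of whose row sums and column sums equal $r$. Let $e_{ij}$ be the $n\times n$ matrix with a $1$ in position $(i,j)$ and $0$ elsewhere, and let $\mathcal{B}=\{\pm(e_{ij}+e_{kl}-e_{il}-e_{kj}) : 1\le i<k\le n,\ 1\le j<l\le n\}$ (the Markov moves). Two vertices $u,v$ are adjacent iff $u-v\in\mathcal{B}$. Thus the degree $d(v)$ equals the number of moves $b\in\mathcal{B}$ with $v+b$ having all entries non-negative. *)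

theory Defs
  imports Main
begin

(* n x n matrices with entries in nat are represented as functions nat => nat => nat,
   indices 0..n-1, required to vanish outside {0..<n} x {0..<n}. *)

definition verts :: "nat \<Rightarrow> nat \<Rightarrow> (nat \<Rightarrow> nat \<Rightarrow> nat) set" where
  "verts n r = {v. (\<forall>i j. (i \<ge> n \<or> j \<ge> n) \<longrightarrow> v i j = 0)
                  \<and> (\<forall>i<n. (\<Sum>j<n. v i j) = r)
                  \<and> (\<forall>j<n. (\<Sum>i<n. v i j) = r)}"

definition emat :: "nat \<Rightarrow> nat \<Rightarrow> nat \<Rightarrow> nat \<Rightarrow> int" where
  "emat i j = (\<lambda>a c. if a = i \<and> c = j then 1 else 0)"

definition basic_move :: "nat \<Rightarrow> nat \<Rightarrow> nat \<Rightarrow> nat \<Rightarrow> nat \<Rightarrow> nat \<Rightarrow> int" where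
  "basic_move i j k l = (\<lambda>a c. emat i j a c + emat k l a c - emat i l a c - emat k j a c)"

definition moves :: "nat \<Rightarrow> (nat \<Rightarrow> nat \<Rightarrow> int) set" where
  "moves n = {b. \<exists>i k j l. i < k \<and> k < n \<and> j < l \<and> l < n \<and>
                 (b = basic_move i j k l \<or> b = (\<lambda>a c. - basic_move i j k l a c))}"

definition mdiff :: "(nat \<Rightarrow> nat \<Rightarrow> nat) \<Rightarrow> (nat \<Rightarrow> nat \<Rightarrow> nat) \<Rightarrow> nat \<Rightarrow> nat \<Rightarrow> int" where
  "mdiff u v = (\<lambda>a c. int (u a c) - int (v a c))"

definition adj :: "nat \<Rightarrow> nat \<Rightarrow> (nat \<Rightarrow> nat \<Rightarrow> nat) \<Rightarrow> (nat \<Rightarrow> nat \<Rightarrow> nat) \<Rightarrow> bool" where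
  "adj n r u v \<longleftrightarrow> u \<in> verts n r \<and> v \<in> verts n r \<and> mdiff u v \<in> moves n"

definition deg :: "nat \<Rightarrow> nat \<Rightarrow> (nat \<Rightarrow> nat \<Rightarrow> nat) \<Rightarrow> nat" where
  "deg n r v = card {u. adj n r u v}"

definition min_deg :: "nat \<Rightarrow> nat \<Rightarrow> nat" where
  "min_deg n r = Min (deg n r ` verts n r)"

end

theory Submission
  imports Defs
begin

(* A neighbour of v is v + b for a Markov move b.  Written from the point of view of v,
   such a move is a "swap": choose positions (a,b) and (c,d) in distinct rows and
   distinct columns with positive entries, decrease them by one and increase (a,d) and
   (c,b) by one.  Every swap changes exactly the rows {a,c}, so the neighbours of v are
   partitioned by the pair of rows they change, and deg v is the sum over all
   n choose 2 row pairs of the sizes of these classes.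

   (1) Every class is non-empty when r >= 1: a positive entry of row a can always be
       paired with a positive entry of row c in another column.  Hence deg v >= n choose 2.
   (2) If v = rP for a permutation matrix P, each row has one positive entry, so a swap
       is determined by its two rows: every class has at most one element and
       deg v = n choose 2, which is therefore also the minimum degree.
   (3) If some row i has two positive entries, every class {i,k} contains two distinct
       swaps, which adds n - 1 to the bound in (1). *)

(* the swap taking one unit from the entries (a,b), (c,d) and giving it to (a,d), (c,b) *)
definition swap_at :: "(nat \<Rightarrow> nat \<Rightarrow> nat) \<Rightarrow> nat \<Rightarrow> nat \<Rightarrow> nat \<Rightarrow> nat \<Rightarrow> nat \<Rightarrow> nat \<Rightarrow> nat" where
  "swap_at v a b c d = (\<lambda>x y. nat (int (v x y) + basic_move a d c b x y))"

definition valid_swap :: "nat \<Rightarrow> (nat \<Rightarrow> nat \<Rightarrow> nat) \<Rightarrow> nat \<Rightarrow> nat \<Rightarrow> nat \<Rightarrow> nat \<Rightarrow> bool" where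
  "valid_swap n v a b c d \<longleftrightarrow>
     a < n \<and> b < n \<and> c < n \<and> d < n \<and> a \<noteq> c \<and> b \<noteq> d \<and> 0 < v a b \<and> 0 < v c d"

definition nbrs :: "nat \<Rightarrow> nat \<Rightarrow> (nat \<Rightarrow> nat \<Rightarrow> nat) \<Rightarrow> (nat \<Rightarrow> nat \<Rightarrow> nat) set" where
  "nbrs n r v = {u. adj n r u v}"

definition changed_rows :: "(nat \<Rightarrow> nat \<Rightarrow> nat) \<Rightarrow> (nat \<Rightarrow> nat \<Rightarrow> nat) \<Rightarrow> nat set" where
  "changed_rows v u = {x. \<exists>y. u x y \<noteq> v x y}"

definition row_pairs :: "nat \<Rightarrow> nat set set" where
  "row_pairs n = {B. B \<subseteq> {..<n} \<and> card B = 2}"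

definition row_class :: "nat \<Rightarrow> nat \<Rightarrow> (nat \<Rightarrow> nat \<Rightarrow> nat) \<Rightarrow> nat set \<Rightarrow> (nat \<Rightarrow> nat \<Rightarrow> nat) set" where
  "row_class n r v B = {u \<in> nbrs n r v. changed_rows v u = B}"

lemma basic_move_eq:
  "basic_move a d c b x y = (if x = a \<and> y = d then 1 else 0) + (if x = c \<and> y = b then 1 else 0)
     - (if x = a \<and> y = b then 1 else 0) - (if x = c \<and> y = d then 1 else 0)"
  by (simp add: basic_move_def emat_def)

lemma sum_indicator_eq:
  "finite A \<Longrightarrow> (\<Sum>y\<in>A. if P \<and> y = d then (1::int) else 0) = (if P \<and> d \<in> A then 1 else 0)"
  "finite A \<Longrightarrow> (\<Sum>y\<in>A. if y = d \<and> P then (1::int) else 0) = (if P \<and> d \<in> A then 1 else 0)"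
  by (cases P; simp)+

lemma basic_move_line_sums:
  "b < n \<Longrightarrow> d < n \<Longrightarrow> (\<Sum>y<n. basic_move a d c b x y) = 0"
  "a < n \<Longrightarrow> c < n \<Longrightarrow> (\<Sum>x<n. basic_move a d c b x y) = 0"
  unfolding basic_move_eq by (simp_all add: sum.distrib sum_subtractf sum_indicator_eq)

(* a valid swap never produces a negative entry *)
lemma swap_at_int:
  assumes "valid_swap n v a b c d"
  shows "int (swap_at v a b c d x y) = int (v x y) + basic_move a d c b x y"
proof -
  have "0 \<le> int (v x y) + basic_move a d c b x y"
    using assms unfolding valid_swap_def basic_move_eq by auto
  thus ?thesis by (simp add: swap_at_def)
qed

(* swapping preserves the line sums, so a valid swap stays a vertex *)
lemma swap_at_in_verts:
  assumes v: "v \<in> verts n r" and sw: "valid_swap n v a b c d"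
  shows "swap_at v a b c d \<in> verts n r"
proof -
  have lt: "a < n" "b < n" "c < n" "d < n" using sw by (auto simp: valid_swap_def)
  have "(\<Sum>j<n. swap_at v a b c d i j) = r" if "i < n" for i
  proof -
    have "int (\<Sum>j<n. swap_at v a b c d i j) = (\<Sum>j<n. int (v i j) + basic_move a d c b i j)"
      by (simp add: swap_at_int[OF sw])
    also have "\<dots> = int (\<Sum>j<n. v i j)"
      using basic_move_line_sums(1)[OF lt(2,4)] by (simp add: sum.distrib)
    also have "\<dots> = int r" using v that by (simp add: verts_def)
    finally show ?thesis by (simp only: of_nat_eq_iff)
  qed
  moreover have "(\<Sum>i<n. swap_at v a b c d i j) = r" if "j < n" for j
  proof -
    have "int (\<Sum>i<n. swap_at v a b c d i j) = (\<Sum>i<n. int (v i j) + basic_move a d c b i j)"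
      by (simp add: swap_at_int[OF sw])
    also have "\<dots> = int (\<Sum>i<n. v i j)"
      using basic_move_line_sums(2)[OF lt(1,3)] by (simp add: sum.distrib)
    also have "\<dots> = int r" using v that by (simp add: verts_def)
    finally show ?thesis by (simp only: of_nat_eq_iff)
  qed
  moreover have "swap_at v a b c d i j = 0" if "i \<ge> n \<or> j \<ge> n" for i j
    using v lt that by (auto simp: verts_def swap_at_def basic_move_eq)
  ultimately show ?thesis by (simp add: verts_def)
qed

lemma basic_move_in_moves:
  assumes "a < n" "b < n" "c < n" "d < n" "a \<noteq> c" "b \<noteq> d"
  shows "basic_move a d c b \<in> moves n"
proof -
  consider "a < c" "d < b" | "a < c" "b < d" | "c < a" "d < b" | "c < a" "b < d"
    using assms by linarith
  thus ?thesis
  proof cases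
    case 1 thus ?thesis using assms unfolding moves_def by blast
  next
    case 2
    hence "basic_move a d c b = (\<lambda>x y. - basic_move a b c d x y)"
      by (auto simp: basic_move_eq fun_eq_iff)
    thus ?thesis using 2 assms unfolding moves_def by blast
  next
    case 3
    hence "basic_move a d c b = (\<lambda>x y. - basic_move c d a b x y)"
      by (auto simp: basic_move_eq fun_eq_iff)
    thus ?thesis using 3 assms unfolding moves_def by blast
  next
    case 4
    hence "basic_move a d c b = basic_move c b a d" by (auto simp: basic_move_eq fun_eq_iff)
    thus ?thesis using 4 assms unfolding moves_def by blast
  qed
qed

lemma swap_at_in_nbrs:
  assumes v: "v \<in> verts n r" and sw: "valid_swap n v a b c d"
  shows "swap_at v a b c d \<in> nbrs n r v"
proof -
  have "mdiff (swap_at v a b c d) v = basic_move a d c b"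
    by (simp add: mdiff_def fun_eq_iff swap_at_int[OF sw])
  thus ?thesis using v swap_at_in_verts[OF v sw] basic_move_in_moves sw
    by (simp add: nbrs_def adj_def valid_swap_def)
qed

lemma nbrs_are_swaps:
  assumes "u \<in> nbrs n r v"
  obtains a b c d where "valid_swap n v a b c d" "u = swap_at v a b c d"
proof -
  from assms obtain i k j l where ik: "i < k" "k < n" "j < l" "l < n" and
    mv: "mdiff u v = basic_move i j k l \<or> mdiff u v = (\<lambda>a c. - basic_move i j k l a c)"
    unfolding nbrs_def adj_def moves_def by blast
  have u_int: "int (u x y) = int (v x y) + mdiff u v x y" for x y by (simp add: mdiff_def)
  have u_eq: "u = swap_at v a b c d" if "\<And>x y. mdiff u v x y = basic_move a d c b x y" for a b c d
  proof (intro ext)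
    fix x y
    have "u x y = nat (int (u x y))" by simp
    thus "u x y = swap_at v a b c d x y" using u_int[of x y] that by (simp add: swap_at_def)
  qed
  from mv show ?thesis
  proof
    assume h: "mdiff u v = basic_move i j k l"
    have "valid_swap n v i l k j"
      using u_int[of i l] u_int[of k j] ik unfolding h valid_swap_def basic_move_eq by auto
    moreover have "u = swap_at v i l k j" using h by (intro u_eq) simp
    ultimately show ?thesis by (rule that)
  next
    assume h: "mdiff u v = (\<lambda>a c. - basic_move i j k l a c)"
    have "valid_swap n v i j k l"
      using u_int[of i j] u_int[of k l] ik unfolding h valid_swap_def basic_move_eq by auto
    moreover have "u = swap_at v i j k l" using h by (intro u_eq) (simp add: basic_move_eq)
    ultimately show ?thesis by (rule that)
  qed
qed

lemma changed_rows_swap_at: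
  assumes sw: "valid_swap n v a b c d"
  shows "changed_rows v (swap_at v a b c d) = {a, c}"
proof -
  have ne: "swap_at v a b c d x y \<noteq> v x y \<longleftrightarrow> basic_move a d c b x y \<noteq> 0" for x y
    using swap_at_int[OF sw, of x y] by linarith
  have "basic_move a d c b a b \<noteq> 0" "basic_move a d c b c d \<noteq> 0"
    using sw by (simp_all add: basic_move_eq valid_swap_def)
  moreover have "basic_move a d c b x y = 0" if "x \<notin> {a, c}" for x y
    using that by (auto simp: basic_move_eq)
  ultimately show ?thesis unfolding changed_rows_def ne by blast
qed

lemma swap_at_commute: "swap_at v a b c d = swap_at v c d a b"
  by (auto simp: swap_at_def fun_eq_iff basic_move_eq)

lemma valid_swap_commute: "valid_swap n v a b c d \<longleftrightarrow> valid_swap n v c d a b"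
  by (auto simp: valid_swap_def)

lemma swap_at_distinct:
  assumes "valid_swap n v a b c d" "valid_swap n v a b' c d'" "b \<noteq> b'"
  shows "swap_at v a b c d \<noteq> swap_at v a b' c d'"
proof -
  have "int (swap_at v a b c d a b) = int (v a b) - 1"
    using swap_at_int[OF assms(1), of a b] assms(1) by (simp add: basic_move_eq valid_swap_def)
  moreover have "int (swap_at v a b' c d' a b) \<ge> int (v a b)"
    using swap_at_int[OF assms(2), of a b] assms by (simp add: basic_move_eq valid_swap_def)
  ultimately show ?thesis by force
qed

lemma finite_nbrs: "finite (nbrs n r v)"
proof -
  have "nbrs n r v \<subseteq> (\<lambda>(a, b, c, d). swap_at v a b c d) ` ({..<n} \<times> {..<n} \<times> {..<n} \<times> {..<n})"
  proof
    fix u assume "u \<in> nbrs n r v"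
    then obtain a b c d where "valid_swap n v a b c d" "u = swap_at v a b c d"
      by (rule nbrs_are_swaps)
    thus "u \<in> (\<lambda>(a, b, c, d). swap_at v a b c d) ` ({..<n} \<times> {..<n} \<times> {..<n} \<times> {..<n})"
      unfolding valid_swap_def by force
  qed
  thus ?thesis by (rule finite_subset) auto
qed

lemma two_entries_le_line_sum:
  "finite A \<Longrightarrow> x \<in> A \<Longrightarrow> y \<in> A \<Longrightarrow> x \<noteq> y \<Longrightarrow> f x + f y \<le> (\<Sum>z\<in>A. f z :: nat)"
  using sum_mono2[of A "{x, y}" f] by simp

lemma sole_entry_of_row:
  assumes v: "v \<in> verts n r" and "k < n" "c < n" and others: "\<forall>d<n. d \<noteq> c \<longrightarrow> v k d = 0"
  shows "v k c = r"
proof -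
  have "(\<Sum>j<n. v k j) = v k c"
    using \<open>c < n\<close> others by (subst sum.remove[of _ c]) auto
  thus ?thesis using v \<open>k < n\<close> by (simp add: verts_def)
qed

lemma positive_entry_in_range:
  assumes "v \<in> verts n r" "0 < v i j"
  shows "i < n \<and> j < n"
proof (rule ccontr)
  assume "\<not> (i < n \<and> j < n)"
  hence "v i j = 0" using assms(1) by (auto simp: verts_def)
  thus False using assms(2) by simp
qed

lemma row_with_two_positive_entries:
  assumes v: "v \<in> verts n r" and "0 < v i j" "v i j \<noteq> r"
  obtains j' where "i < n" "j < n" "j' < n" "j' \<noteq> j" "0 < v i j'"
proof -
  have "i < n" "j < n" using positive_entry_in_range[OF v \<open>0 < v i j\<close>] by simp_all
  moreover have "\<exists>j'<n. j' \<noteq> j \<and> 0 < v i j'"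
  proof (rule ccontr)
    assume "\<not> ?thesis"
    hence "\<forall>d<n. d \<noteq> j \<longrightarrow> v i d = 0" by auto
    thus False using sole_entry_of_row[OF v \<open>i < n\<close> \<open>j < n\<close>] \<open>v i j \<noteq> r\<close> by blast
  qed
  ultimately show ?thesis using that by blast
qed

(* if row a has a positive entry in column c, every other row k has a positive entry
   outside column c: otherwise the column c would sum to more than r *)
lemma positive_entry_off_column:
  assumes v: "v \<in> verts n r" and r: "r \<ge> 1"
    and "a < n" "k < n" "c < n" "a \<noteq> k" "0 < v a c"
  shows "\<exists>d<n. d \<noteq> c \<and> 0 < v k d"
proof (rule ccontr)
  assume "\<not> ?thesis"
  hence "v k c = r" using sole_entry_of_row[OF v \<open>k < n\<close> \<open>c < n\<close>] by auto
  moreover have "v a c + v k c \<le> r"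
    using two_entries_le_line_sum[of "{..<n}" a k "\<lambda>x. v x c"] assms by (simp add: verts_def)
  ultimately show False using \<open>0 < v a c\<close> by simp
qed

lemma positive_entry_in_row:
  assumes v: "v \<in> verts n r" and r: "r \<ge> 1" and "a < n"
  shows "\<exists>b<n. 0 < v a b"
proof (rule ccontr)
  assume "\<not> ?thesis"
  hence "(\<Sum>j<n. v a j) = 0" by simp
  moreover have "(\<Sum>j<n. v a j) = r" using v \<open>a < n\<close> by (simp add: verts_def)
  ultimately show False using r by linarith
qed

lemma card_row_pairs: "card (row_pairs n) = n choose 2"
  unfolding row_pairs_def using n_subsets[of "{..<n}" 2] by simp

lemma finite_row_pairs: "finite (row_pairs n)"
  unfolding row_pairs_def by (rule finite_subset[of _ "Pow {..<n}"]) auto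

lemma card_row_pairs_containing:
  assumes "i < n"
  shows "card {B \<in> row_pairs n. i \<in> B} = n - 1"
proof -
  have "{B \<in> row_pairs n. i \<in> B} = (\<lambda>k. {i, k}) ` ({..<n} - {i})"
  proof (intro set_eqI iffI)
    fix B assume "B \<in> {B \<in> row_pairs n. i \<in> B}"
    then obtain x y where "B = {x, y}" "x \<noteq> y" "B \<subseteq> {..<n}" "i \<in> B"
      unfolding row_pairs_def card_2_iff by blast
    thus "B \<in> (\<lambda>k. {i, k}) ` ({..<n} - {i})" by (auto simp: insert_commute)
  next
    fix B assume "B \<in> (\<lambda>k. {i, k}) ` ({..<n} - {i})"
    then obtain k where "B = {i, k}" "k < n" "k \<noteq> i" by blast
    thus "B \<in> {B \<in> row_pairs n. i \<in> B}" using assms by (auto simp: row_pairs_def)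
  qed
  moreover have "inj_on (\<lambda>k. {i, k}) ({..<n} - {i})"
    by (auto simp: inj_on_def doubleton_eq_iff)
  ultimately show ?thesis using assms by (simp add: card_image)
qed

lemma deg_eq_sum_row_classes:
  assumes v: "v \<in> verts n r"
  shows "deg n r v = (\<Sum>B\<in>row_pairs n. card (row_class n r v B))"
proof -
  have rows: "changed_rows v ` nbrs n r v \<subseteq> row_pairs n"
  proof
    fix B assume "B \<in> changed_rows v ` nbrs n r v"
    then obtain u where u: "u \<in> nbrs n r v" and B: "B = changed_rows v u" by blast
    from u obtain a b c d where sw: "valid_swap n v a b c d" "u = swap_at v a b c d"
      by (rule nbrs_are_swaps)
    hence "B = {a, c}" using B changed_rows_swap_at by simp
    thus "B \<in> row_pairs n" using sw(1) unfolding row_pairs_def valid_swap_def by auto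
  qed
  have "deg n r v = (\<Sum>u\<in>nbrs n r v. 1)" by (simp add: deg_def nbrs_def)
  also have "\<dots> = (\<Sum>B\<in>row_pairs n. \<Sum>u\<in>row_class n r v B. 1)"
    unfolding row_class_def using sum.group[OF finite_nbrs finite_row_pairs rows, of "\<lambda>_. 1::nat"]
    by simp
  finally show ?thesis by simp
qed

lemma finite_row_class: "finite (row_class n r v B)"
  unfolding row_class_def using finite_nbrs by simp

lemma row_class_nonempty:
  assumes v: "v \<in> verts n r" and r: "r \<ge> 1" and B: "B \<in> row_pairs n"
  shows "1 \<le> card (row_class n r v B)"
proof -
  obtain a c where ac: "B = {a, c}" "a \<noteq> c" "a < n" "c < n"
    using B unfolding row_pairs_def card_2_iff by blast
  obtain b where b: "b < n" "0 < v a b" using positive_entry_in_row[OF v r \<open>a < n\<close>] by blast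
  obtain d where "d < n" "d \<noteq> b" "0 < v c d"
    using positive_entry_off_column[OF v r \<open>a < n\<close> \<open>c < n\<close> b(1) \<open>a \<noteq> c\<close> b(2)] by blast
  hence "valid_swap n v a b c d" using ac b by (auto simp: valid_swap_def)
  hence "swap_at v a b c d \<in> row_class n r v B"
    using swap_at_in_nbrs[OF v] changed_rows_swap_at ac(1) unfolding row_class_def by blast
  hence "0 < card (row_class n r v B)" using finite_row_class card_gt_0_iff by blast
  thus ?thesis by simp
qed

lemma row_class_two_elements:
  assumes v: "v \<in> verts n r" and r: "r \<ge> 1" and "a < n" "c < n" "a \<noteq> c"
    and "b1 < n" "b2 < n" "b1 \<noteq> b2" "0 < v a b1" "0 < v a b2"
  shows "2 \<le> card (row_class n r v {a, c})"
proof -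
  obtain d1 where "d1 < n" "d1 \<noteq> b1" "0 < v c d1"
    using positive_entry_off_column[OF v r, of a c b1] assms by blast
  hence sw1: "valid_swap n v a b1 c d1" using assms by (auto simp: valid_swap_def)
  obtain d2 where "d2 < n" "d2 \<noteq> b2" "0 < v c d2"
    using positive_entry_off_column[OF v r, of a c b2] assms by blast
  hence sw2: "valid_swap n v a b2 c d2" using assms by (auto simp: valid_swap_def)
  have "swap_at v a b1 c d1 \<noteq> swap_at v a b2 c d2"
    using swap_at_distinct[OF sw1 sw2 \<open>b1 \<noteq> b2\<close>] .
  hence "2 = card {swap_at v a b1 c d1, swap_at v a b2 c d2}" by simp
  also have "\<dots> \<le> card (row_class n r v {a, c})"
    using swap_at_in_nbrs[OF v] changed_rows_swap_at sw1 sw2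
    by (intro card_mono[OF finite_row_class]) (auto simp: row_class_def)
  finally show ?thesis .
qed

(* for v = rP a swap is determined by its rows, since each row has one positive entry *)
lemma row_class_at_most_one:
  assumes v: "v \<in> verts n r" and r: "r \<ge> 1" and perm: "\<forall>i j. 0 < v i j \<longrightarrow> v i j = r"
  shows "card (row_class n r v B) \<le> 1"
proof -
  have unique: "b = b'" if "a < n" "b < n" "b' < n" "0 < v a b" "0 < v a b'" for a b b'
  proof (rule ccontr)
    assume "b \<noteq> b'"
    hence "v a b + v a b' \<le> r"
      using two_entries_le_line_sum[of "{..<n}" b b' "v a"] v that by (simp add: verts_def)
    moreover have "v a b = r" "v a b' = r" using perm that(4,5) by auto
    ultimately show False using r by linarith
  qed
  have same_rows: "swap_at v a b c d = swap_at v a b' c d'"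
    if "valid_swap n v a b c d" "valid_swap n v a b' c d'" for a b c d b' d'
  proof -
    have "b = b'" by (rule unique[of a]) (use that in \<open>auto simp: valid_swap_def\<close>)
    moreover have "d = d'" by (rule unique[of c]) (use that in \<open>auto simp: valid_swap_def\<close>)
    ultimately show ?thesis by simp
  qed
  have "u = u'" if "u \<in> row_class n r v B" "u' \<in> row_class n r v B" for u u'
  proof -
    from that have u: "u \<in> nbrs n r v" "changed_rows v u = B"
      and u': "u' \<in> nbrs n r v" "changed_rows v u' = B" by (simp_all add: row_class_def)
    obtain a b c d where sw: "valid_swap n v a b c d" "u = swap_at v a b c d"
      using u(1) by (rule nbrs_are_swaps)
    obtain a' b' c' d' where sw': "valid_swap n v a' b' c' d'" "u' = swap_at v a' b' c' d'"
      using u'(1) by (rule nbrs_are_swaps)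
    have "{a, c} = {a', c'}"
      using u(2) u'(2) changed_rows_swap_at[OF sw(1)] changed_rows_swap_at[OF sw'(1)]
      unfolding sw(2) sw'(2) by simp
    hence "(a' = a \<and> c' = c) \<or> (a' = c \<and> c' = a)" by (auto simp: doubleton_eq_iff)
    thus ?thesis
    proof
      assume "a' = a \<and> c' = c"
      with sw' have sw'': "valid_swap n v a b' c d'" "u' = swap_at v a b' c d'" by simp_all
      from same_rows[OF sw(1) sw''(1)] show ?thesis using sw(2) sw''(2) by simp
    next
      assume "a' = c \<and> c' = a"
      with sw' have sw'': "valid_swap n v a d' c b'" "u' = swap_at v a d' c b'"
        using valid_swap_commute[of n v a d' c b'] swap_at_commute[of v a d' c b'] by simp_all
      from same_rows[OF sw(1) sw''(1)] show ?thesis using sw(2) sw''(2) by simp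
    qed
  qed
  thus ?thesis using finite_row_class by (simp add: card_le_Suc0_iff_eq)
qed

lemma deg_lower_bound:
  assumes "v \<in> verts n r" "r \<ge> 1"
  shows "n choose 2 \<le> deg n r v"
proof -
  have "n choose 2 = (\<Sum>B\<in>row_pairs n. 1)" by (simp add: card_row_pairs)
  also have "\<dots> \<le> (\<Sum>B\<in>row_pairs n. card (row_class n r v B))"
    using row_class_nonempty[OF assms] by (intro sum_mono) auto
  also have "\<dots> = deg n r v" using deg_eq_sum_row_classes[OF assms(1)] by simp
  finally show ?thesis .
qed

lemma deg_permutation:
  assumes "v \<in> verts n r" "r \<ge> 1" "\<forall>i j. 0 < v i j \<longrightarrow> v i j = r"
  shows "deg n r v = n choose 2"
proof -
  have "deg n r v = (\<Sum>B\<in>row_pairs n. card (row_class n r v B))"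
    using deg_eq_sum_row_classes[OF assms(1)] .
  also have "\<dots> \<le> (\<Sum>B\<in>row_pairs n. 1)"
    using row_class_at_most_one[OF assms] by (intro sum_mono) auto
  also have "\<dots> = n choose 2" by (simp add: card_row_pairs)
  finally show ?thesis using deg_lower_bound[OF assms(1,2)] by simp
qed

lemma deg_row_with_two_positive_entries:
  assumes v: "v \<in> verts n r" and r: "r \<ge> 1" and "i < n"
    and "b1 < n" "b2 < n" "b1 \<noteq> b2" "0 < v i b1" "0 < v i b2"
  shows "(n choose 2) + (n - 1) \<le> deg n r v"
proof -
  have "(\<Sum>B\<in>row_pairs n. 1 + (if i \<in> B then 1 else 0))
          \<le> (\<Sum>B\<in>row_pairs n. card (row_class n r v B))"
  proof (intro sum_mono)
    fix B assume B: "B \<in> row_pairs n"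
    show "1 + (if i \<in> B then 1 else 0) \<le> card (row_class n r v B)"
    proof (cases "i \<in> B")
      case True
      then obtain k where "B = {i, k}" "i \<noteq> k" "k < n"
        using B unfolding row_pairs_def card_2_iff by auto
      thus ?thesis
        using row_class_two_elements[OF v r \<open>i < n\<close> \<open>k < n\<close> \<open>i \<noteq> k\<close> assms(4-8)] True
        by simp
    qed (use row_class_nonempty[OF v r B] in simp)
  qed
  moreover have "(\<Sum>B\<in>row_pairs n. 1 + (if i \<in> B then 1 else 0)) = (n choose 2) + (n - 1)"
  proof -
    have "(\<Sum>B\<in>row_pairs n. if i \<in> B then 1 else 0) = card {B \<in> row_pairs n. i \<in> B}"
      using sum.inter_filter[OF finite_row_pairs, where g = "\<lambda>_. 1::nat" and P = "\<lambda>B. i \<in> B"] by simp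
    thus ?thesis unfolding sum.distrib
      using card_row_pairs card_row_pairs_containing[OF \<open>i < n\<close>] by simp
  qed
  ultimately show ?thesis using deg_eq_sum_row_classes[OF v] by simp
qed

(* G(n,r) has finitely many vertices, as all entries are at most r; so min_deg is a minimum *)
lemma finite_verts: "finite (verts n r)"
proof -
  define Rows where "Rows = {g :: nat \<Rightarrow> nat. \<forall>x. (x \<in> {..<n} \<longrightarrow> g x \<in> {..r}) \<and> (x \<notin> {..<n} \<longrightarrow> g x = 0)}"
  define Mats where "Mats = {f :: nat \<Rightarrow> nat \<Rightarrow> nat. \<forall>x. (x \<in> {..<n} \<longrightarrow> f x \<in> Rows) \<and> (x \<notin> {..<n} \<longrightarrow> f x = (\<lambda>_. 0))}"
  have "finite Rows" unfolding Rows_def by (rule finite_set_of_finite_funs) auto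
  hence "finite Mats" unfolding Mats_def by (intro finite_set_of_finite_funs) auto
  moreover have "verts n r \<subseteq> Mats"
  proof
    fix f assume f: "f \<in> verts n r"
    have "f x y \<le> r" if "x < n" "y < n" for x y
      using member_le_sum[of y "{..<n}" "f x"] f that by (simp add: verts_def)
    thus "f \<in> Mats" using f unfolding Mats_def Rows_def verts_def by (auto simp: fun_eq_iff)
  qed
  ultimately show ?thesis by (rule finite_subset[rotated])
qed

lemma min_deg_eq_choose_two:
  assumes v: "v \<in> verts n r" and r: "r \<ge> 1" and deg_v: "deg n r v = n choose 2"
  shows "min_deg n r = n choose 2"
  unfolding min_deg_def
proof (rule Min_eqI)
  show "finite (deg n r ` verts n r)" using finite_verts by simp
  show "n choose 2 \<le> d" if "d \<in> deg n r ` verts n r" for d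
    using that deg_lower_bound[OF _ r] by auto
  show "n choose 2 \<in> deg n r ` verts n r" using deg_v v by (metis image_eqI)
qed

lemma choose_two_plus_pred: "(n + 2) * (n - 1) = 2 * ((n choose 2) + (n - 1))"
proof -
  have "even (n * (n - 1))" by (cases "even n") auto
  hence "2 * (n choose 2) = n * (n - 1)" by (simp add: choose_two)
  thus ?thesis by (simp only: add_mult_distrib add_mult_distrib2)
qed

theorem lemma2p1:
  fixes n r :: nat and v :: "nat \<Rightarrow> nat \<Rightarrow> nat"
  assumes "n \<ge> 1" and "r \<ge> 1" and "v \<in> verts n r"
  shows "((\<forall>i j. v i j > 0 \<longrightarrow> v i j = r) \<longrightarrow>
            deg n r v = min_deg n r \<and> min_deg n r = n choose 2)
       \<and> (\<not> (\<forall>i j. v i j > 0 \<longrightarrow> v i j = r) \<longrightarrow>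
            (n + 2) * (n - 1) \<le> 2 * deg n r v \<and> (n choose 2) + (n - 1) \<le> deg n r v)"
proof (intro conjI impI)
  assume perm: "\<forall>i j. v i j > 0 \<longrightarrow> v i j = r"
  have deg_v: "deg n r v = n choose 2" using deg_permutation[OF assms(3,2) perm] .
  moreover have "min_deg n r = n choose 2" using min_deg_eq_choose_two[OF assms(3,2) deg_v] .
  ultimately show "deg n r v = min_deg n r" "min_deg n r = n choose 2" by simp_all
next
  assume "\<not> (\<forall>i j. v i j > 0 \<longrightarrow> v i j = r)"
  then obtain i j where "0 < v i j" "v i j \<noteq> r" by blast
  then obtain j' where "i < n" "j < n" "j' < n" "j' \<noteq> j" "0 < v i j'"
    using row_with_two_positive_entries[OF assms(3)] by blast
  thus lower: "(n choose 2) + (n - 1) \<le> deg n r v"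
    using deg_row_with_two_positive_entries[OF assms(3,2)] \<open>0 < v i j\<close> by blast
  show "(n + 2) * (n - 1) \<le> 2 * deg n r v" using lower choose_two_plus_pred by simp
qed

end
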